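(* For all positive integers $n,q$, the polynomial $f_{n,q}:\mathbb{C}^3\to\mathbb{C}$, $f_{n,q}(x,y,z)=x-3x^{2n+1}y^{2q}+2x^{3n+1}y^{3q}+yz$, is M-tame but not quasitame.
   Context: For a polynomial $g:\mathbb{C}^m\to\mathbb{C}$, let $\operatorname{grad} g(x)=\left(\overline{\frac{\partial g}{\partial x_1}(x)},\dots,\overline{\frac{\partial g}{\partial x_m}(x)}\right)$ and let $\langle\cdot,\cdot\rangle$ denote the Hermitian product on $\mathbb{C}^m$. Define $M(g)=\{x\in\mathbb{C}^m : \exists\lambda\in\mathbb{C},\ \operatorname{grad} g(x)=\lambda x\}$. The polynomial $g$ is called M-tame if for every sequence $(z^k)\subseteq M(g)$ with $\|z^k\|\to\infty$ one has $|g(z^k)|\to\infty$. The polynomial $g$ is called quasitame if for every sequence $(z^k)\subseteq\mathbb{C}^m$ with $\|z^k\|\to\infty$ and $\operatorname{grad} g(z^k)\to 0$ one has $|g(z^k)-\langle z^k,\operatorname{grad} g(z^k)\rangle|\to\infty$. *)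

theory Defs
  imports "HOL-Analysis.Analysis"
begin

definition cpartial :: "(complex ^ 'm \<Rightarrow> complex) \<Rightarrow> 'm \<Rightarrow> complex ^ 'm \<Rightarrow> complex" where
  "cpartial g i x = deriv (\<lambda>t. g (\<chi> j. if j = i then t else x $ j)) (x $ i)"

definition cgrad :: "(complex ^ 'm \<Rightarrow> complex) \<Rightarrow> complex ^ 'm \<Rightarrow> complex ^ 'm" where
  "cgrad g x = (\<chi> i. cnj (cpartial g i x))"

definition hprod :: "complex ^ 'm \<Rightarrow> complex ^ 'm \<Rightarrow> complex" where
  "hprod z w = (\<Sum>i\<in>UNIV. z $ i * cnj (w $ i))"

definition Mset :: "(complex ^ 'm \<Rightarrow> complex) \<Rightarrow> (complex ^ 'm) set" where
  "Mset g = {x. \<exists>c::complex. cgrad g x = c *s x}"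

definition M_tame :: "(complex ^ 'm \<Rightarrow> complex) \<Rightarrow> bool" where
  "M_tame g \<longleftrightarrow> (\<forall>z :: nat \<Rightarrow> complex ^ 'm.
      (\<forall>k. z k \<in> Mset g) \<and> filterlim (\<lambda>k. norm (z k)) at_top sequentially
      \<longrightarrow> filterlim (\<lambda>k. norm (g (z k))) at_top sequentially)"

definition quasitame :: "(complex ^ 'm \<Rightarrow> complex) \<Rightarrow> bool" where
  "quasitame g \<longleftrightarrow> (\<forall>z :: nat \<Rightarrow> complex ^ 'm.
      filterlim (\<lambda>k. norm (z k)) at_top sequentially \<and> (\<lambda>k. cgrad g (z k)) \<longlonglongrightarrow> 0
      \<longrightarrow> filterlim (\<lambda>k. norm (g (z k) - hprod (z k) (cgrad g (z k)))) at_top sequentially)"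

definition f_nq :: "nat \<Rightarrow> nat \<Rightarrow> complex ^ 3 \<Rightarrow> complex" where
  "f_nq n q v = (let x = v $ 1; y = v $ 2; z = v $ 3 in
     x - 3 * x ^ (2*n+1) * y ^ (2*q) + 2 * x ^ (3*n+1) * y ^ (3*q) + y * z)"

end

theory Submission
  imports Defs
begin

(* Put u = x^n y^q. Then df/dx = P(u) with P(u) = (u - 1)((u - 1)(2u + 1) + 6n u^2),
   y df/dy = 6q x u^2 (u - 1) + yz and df/dz = y. At a point of M(f) with y <> 0, say
   grad f = conj mu v, this gives x P(u) = mu |x|^2, yz = mu |z|^2 and
   6q x u^2 (u - 1) = mu (m^2 - 1) |z|^2 with m = |mu|. Comparing the first and the last equation,
   S = (u - 1)(2u + 1)/u^2 is real, and 6q f = mu |z|^2 ((m^2 - 1) S + 6q). Together with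
   elementary bounds on u in terms of S (S >= 1 if |u| > 4, |u|^2 |u - 1| |S| >= 3/80 if S <= -6),
   a case distinction on m < 1 or m > 1 and on the sign of S bounds |v| by a function of |f(v)|.
   So the sublevel sets of f on M(f) are bounded, and f is M-tame.
   On the curve (t^q, t^-n, 0) we have u = 1, a root of P, so grad f = (0, 0, conj y) tends to 0
   while f = <v, grad f> = 0: f is not quasitame. *)

section \<open>Tameness criteria\<close>

lemma M_tame_if_bounded_sublevel_sets:
  fixes g :: "complex ^ 'm \<Rightarrow> complex"
  assumes "\<And>K. bounded {v \<in> Mset g. norm (g v) \<le> K}"
  shows "M_tame g"
  unfolding M_tame_def
proof (intro allI impI)
  fix z :: "nat \<Rightarrow> complex ^ 'm"
  assume z: "(\<forall>k. z k \<in> Mset g) \<and> filterlim (\<lambda>k. norm (z k)) at_top sequentially"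
  show "filterlim (\<lambda>k. norm (g (z k))) at_top sequentially"
    unfolding filterlim_at_top
  proof
    fix K :: real
    obtain B where B: "\<And>v. v \<in> Mset g \<Longrightarrow> norm (g v) \<le> K \<Longrightarrow> norm v \<le> B"
      using assms[of K] unfolding bounded_iff by blast
    have "eventually (\<lambda>k. B + 1 \<le> norm (z k)) sequentially"
      using z unfolding filterlim_at_top by blast
    then show "eventually (\<lambda>k. K \<le> norm (g (z k))) sequentially"
    proof eventually_elim
      case (elim k)
      show ?case
      proof (rule ccontr)
        assume "\<not> K \<le> norm (g (z k))"
        then have "norm (z k) \<le> B" using B z by simp
        with elim show False by simp
      qed
    qed
  qed
qed

lemma not_quasitameI:
  assumes "filterlim (\<lambda>k. norm (z k)) at_top sequentially"
    and "(\<lambda>k. cgrad g (z k)) \<longlonglongrightarrow> 0"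
    and "\<And>k. g (z k) = hprod (z k) (cgrad g (z k))"
  shows "\<not> quasitame g"
proof
  assume "quasitame g"
  then have "filterlim (\<lambda>k. 0 :: real) at_top sequentially"
    using assms unfolding quasitame_def by force
  then show False
    unfolding filterlim_at_top by (metis eventually_const_iff zero_less_one linorder_not_le
        trivial_limit_sequentially)
qed

lemma cpartial_eq_if_in_Mset:
  assumes "v \<in> Mset g"
  obtains \<mu> where "\<And>i. cpartial g i v = \<mu> * cnj (v $ i)"
proof -
  obtain c where "cgrad g v = c *s v" using assms unfolding Mset_def by blast
  then have "cnj (cpartial g i v) = c * v $ i" for i
    unfolding cgrad_def by (metis vec_lambda_beta vector_smult_component)
  then have "cpartial g i v = cnj c * cnj (v $ i)" for i
    by (metis complex_cnj_cnj complex_cnj_mult)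
  with that show ?thesis by blast
qed

section \<open>The partial derivatives of f_nq\<close>

lemma cpartial_eqI:
  assumes "\<And>t. g (\<chi> j. if j = i then t else v $ j) = h t"
    and "(h has_field_derivative d) (at (v $ i))"
  shows "cpartial g i v = d"
  unfolding cpartial_def assms(1) using assms(2) by (rule DERIV_imp_deriv)

lemma norm_vec3_squared:
  "norm (v :: complex ^ 3) ^ 2 = norm (v $ 1) ^ 2 + norm (v $ 2) ^ 2 + norm (v $ 3) ^ 2"
  unfolding norm_vec_def L2_set_def sum_3 by simp

definition dfdx_poly :: "nat \<Rightarrow> complex \<Rightarrow> complex" where
  "dfdx_poly n u = 1 - 3 * of_nat (2*n+1) * u^2 + 2 * of_nat (3*n+1) * u^3"

lemma cpartial_f_nq_1: "cpartial (f_nq n q) 1 v = dfdx_poly n (v$1 ^ n * v$2 ^ q)"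
proof (rule cpartial_eqI)
  show "f_nq n q (\<chi> j. if j = 1 then t else v $ j)
      = t - 3 * t ^ (2*n+1) * v$2 ^ (2*q) + 2 * t ^ (3*n+1) * v$2 ^ (3*q) + v$2 * v$3" for t
    by (simp add: f_nq_def Let_def)
  show "((\<lambda>t. t - 3 * t ^ (2*n+1) * v$2 ^ (2*q) + 2 * t ^ (3*n+1) * v$2 ^ (3*q) + v$2 * v$3)
     has_field_derivative dfdx_poly n (v$1 ^ n * v$2 ^ q)) (at (v$1))"
    by (rule derivative_eq_intros refl)+
      (simp add: dfdx_poly_def power_mult_distrib power_mult[symmetric] algebra_simps)
qed

lemma y_mult_cpartial_f_nq_2:
  assumes "q > 0"
  shows "v$2 * cpartial (f_nq n q) 2 v
    = 6 * of_nat q * v$1 * ((v$1 ^ n * v$2 ^ q) ^ 3 - (v$1 ^ n * v$2 ^ q) ^ 2) + v$2 * v$3"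
proof -
  have p2: "cpartial (f_nq n q) 2 v = - 3 * v$1 ^ (2*n+1) * (of_nat (2*q) * v$2 ^ (2*q-1))
      + 2 * v$1 ^ (3*n+1) * (of_nat (3*q) * v$2 ^ (3*q-1)) + v$3"
  proof (rule cpartial_eqI)
    show "f_nq n q (\<chi> j. if j = 2 then t else v $ j)
        = v$1 - 3 * v$1 ^ (2*n+1) * t ^ (2*q) + 2 * v$1 ^ (3*n+1) * t ^ (3*q) + t * v$3" for t
      by (simp add: f_nq_def Let_def)
  qed (auto intro!: derivative_eq_intros)
  have pw: "v$2 * v$2 ^ (2*q-1) = v$2 ^ (2*q)" "v$2 * v$2 ^ (3*q-1) = v$2 ^ (3*q)"
    using assms by (simp_all add: power_Suc[symmetric] del: power_Suc)
  have "v$2 * cpartial (f_nq n q) 2 v = - 6 * of_nat q * v$1 ^ (2*n+1) * v$2 ^ (2*q)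
      + 6 * of_nat q * v$1 ^ (3*n+1) * v$2 ^ (3*q) + v$2 * v$3"
    unfolding p2 pw[symmetric] by (simp add: algebra_simps)
  then show ?thesis
    by (simp add: power_mult_distrib power_mult[symmetric] algebra_simps)
qed

lemma cpartial_f_nq_3: "cpartial (f_nq n q) 3 v = v$2"
proof (rule cpartial_eqI)
  show "f_nq n q (\<chi> j. if j = 3 then t else v $ j)
      = v$1 - 3 * v$1 ^ (2*n+1) * v$2 ^ (2*q) + 2 * v$1 ^ (3*n+1) * v$2 ^ (3*q) + v$2 * t" for t
    by (simp add: f_nq_def Let_def)
qed (auto intro!: derivative_eq_intros)

lemma f_nq_eq:
  "f_nq n q v = v$1 * (1 - 3 * (v$1 ^ n * v$2 ^ q) ^ 2 + 2 * (v$1 ^ n * v$2 ^ q) ^ 3) + v$2 * v$3"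
  by (simp add: f_nq_def Let_def power_mult_distrib power_mult[symmetric] algebra_simps)

section \<open>Elementary bounds in the variable u\<close>

lemma dfdx_poly_factor: "dfdx_poly n u = (u - 1) * ((u - 1) * (2 * u + 1) + 6 * of_nat n * u^2)"
  unfolding dfdx_poly_def by (simp add: algebra_simps power2_eq_square power3_eq_cube)

lemma norm_dfdx_poly_le:
  assumes "n > 0" and "norm u \<le> 4"
  shows "norm (dfdx_poly n u) \<le> 657 * real n"
proof -
  have "norm (dfdx_poly n u) \<le> 1 + 3 * real (2*n+1) * norm u ^ 2 + 2 * real (3*n+1) * norm u ^ 3"
    unfolding dfdx_poly_def
    by (rule order_trans[OF norm_triangle_ineq] order_trans[OF norm_triangle_ineq4] add_mono)+
      (simp_all only: norm_mult norm_power norm_of_nat norm_numeral norm_one order_refl)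
  also have "\<dots> \<le> 1 + 3 * real (2*n+1) * 4 ^ 2 + 2 * real (3*n+1) * 4 ^ 3"
    using assms(2) by (intro add_mono mult_left_mono power_mono order_refl) auto
  also have "\<dots> \<le> 657 * real n" using assms(1) by simp
  finally show ?thesis .
qed

lemma norm_dfdx_poly_ge:
  assumes "n > 0" and small: "norm u ^ 2 \<le> 1 / (34 * real n)"
  shows "1/2 \<le> norm (dfdx_poly n u)"
proof -
  have "norm u ^ 2 \<le> 1" using small assms(1) by (simp add: divide_le_eq_1 order_trans)
  then have cube: "norm u ^ 3 \<le> norm u ^ 2" by (simp add: power_le_one_iff power_decreasing)
  have "1 \<le> norm (dfdx_poly n u) + 3 * real (2*n+1) * norm u ^ 2 + 2 * real (3*n+1) * norm u ^ 3"
  proof -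
    have "(1::complex) = dfdx_poly n u + 3 * of_nat (2*n+1) * u^2 - 2 * of_nat (3*n+1) * u^3"
      unfolding dfdx_poly_def by simp
    then have "norm (1::complex) \<le> norm (dfdx_poly n u + 3 * of_nat (2*n+1) * u^2)
        + norm (2 * of_nat (3*n+1) * u^3)"
      by (metis norm_triangle_ineq4)
    also have "\<dots> \<le> norm (dfdx_poly n u) + norm (3 * of_nat (2*n+1) * u^2)
        + norm (2 * of_nat (3*n+1) * u^3)"
      by (simp add: norm_triangle_ineq)
    finally show ?thesis by (simp only: norm_mult norm_power norm_of_nat norm_numeral norm_one)
  qed
  also have "\<dots> \<le> norm (dfdx_poly n u) + 3 * real (2*n+1) * norm u ^ 2 + 2 * real (3*n+1) * norm u ^ 2"
    using cube by (intro add_mono[OF order_refl] mult_left_mono) auto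
  also have "\<dots> = norm (dfdx_poly n u) + (12 * real n + 5) * norm u ^ 2"
    by (simp add: algebra_simps)
  also have "\<dots> \<le> norm (dfdx_poly n u) + (12 * real n + 5) * (1 / (34 * real n))"
    using small by (intro add_left_mono mult_left_mono) auto
  also have "\<dots> \<le> norm (dfdx_poly n u) + 1/2" using assms(1) by (simp add: field_simps)
  finally show ?thesis by simp
qed

lemma S_ge_1_if_norm_gt_4:
  fixes u :: complex
  assumes S: "(u - 1) * (2 * u + 1) = of_real S * u^2" and large: "4 < norm u"
  shows "1 \<le> S"
proof -
  have "u \<noteq> 0" using large by auto
  then have "of_real S = 2 - inverse u - inverse u ^ 2"
    using S by (simp add: field_simps power2_eq_square)
  then have "S = Re (2 - inverse u - inverse u ^ 2)"
    by (metis Re_complex_of_real)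
  then have "S = 2 - Re (inverse u) - Re (inverse u ^ 2)"
    by simp
  moreover have "Re (inverse u) \<le> 1/4"
  proof -
    have "Re (inverse u) \<le> norm (inverse u)" by (rule complex_Re_le_cmod)
    also have "\<dots> = 1 / norm u" by (simp add: norm_inverse divide_inverse)
    also have "\<dots> \<le> 1/4" using large by (intro divide_left_mono) auto
    finally show ?thesis .
  qed
  moreover have "Re (inverse u ^ 2) \<le> 1/16"
  proof -
    have "Re (inverse u ^ 2) \<le> (1 / norm u) ^ 2"
      using complex_Re_le_cmod[of "inverse u ^ 2"] by (simp add: norm_inverse norm_power divide_inverse)
    also have "\<dots> \<le> (1/4) ^ 2" using large by (intro power_mono divide_left_mono) auto
    finally show ?thesis by (simp add: power2_eq_square)
  qed
  ultimately show ?thesis by linarith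
qed

lemma norm_u_sq_mult_abs_S_ge_if_S_le_minus_6:
  fixes u :: complex
  assumes S: "(u - 1) * (2 * u + 1) = of_real S * u^2" and "S \<le> -6"
  shows "3/80 \<le> norm u ^ 2 * norm (u - 1) * \<bar>S\<bar>"
proof -
  define W where "W = norm (u - 1)"
  define V where "V = norm (2 * u + 1)"
  have WV: "W * V = \<bar>S\<bar> * norm u ^ 2"
    using arg_cong[OF S, of norm] unfolding W_def V_def by (simp add: norm_mult norm_power)
  have eq: "norm u ^ 2 * norm (u - 1) * \<bar>S\<bar> = W * (W * V)"
    unfolding WV unfolding W_def by (simp add: algebra_simps)
  have "W \<ge> 0" "V \<ge> 0" unfolding W_def V_def by simp_all
  show ?thesis
  proof (cases "norm u \<le> 1/4")
    case True
    have "W \<ge> 3/4"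
      using norm_triangle_ineq2[of 1 u] True unfolding W_def by (simp add: norm_minus_commute)
    moreover have "V \<ge> 1/2"
      using norm_triangle_ineq2[of 1 "- 2 * u"] True unfolding V_def by (simp add: norm_mult add.commute)
    ultimately have "(3/4) * ((3/4) * (1/2)) \<le> W * (W * V)"
      using \<open>V \<ge> 0\<close> by (intro mult_mono) auto
    then show ?thesis unfolding eq by simp
  next
    case False
    have "6 * (1/4)^2 \<le> \<bar>S\<bar> * norm u ^ 2"
      using False \<open>S \<le> -6\<close> by (intro mult_mono power_mono) auto
    then have WV_ge: "3/8 \<le> W * V" unfolding WV by (simp add: power2_eq_square)
    have V_le: "V \<le> 2 * W + 3"
    proof -
      have "V = norm (2 * (u - 1) + 3)" unfolding V_def by (simp add: algebra_simps)
      also have "\<dots> \<le> norm (2 * (u - 1)) + norm (3 :: complex)" by (rule norm_triangle_ineq)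
      also have "\<dots> = 2 * W + 3" by (simp only: W_def norm_mult) simp
      finally show ?thesis .
    qed
    have "1/10 < W"
    proof (rule ccontr)
      assume "\<not> 1/10 < W"
      then have "W * V \<le> (1/10) * (2 * (1/10) + 3)"
        using V_le \<open>V \<ge> 0\<close> by (intro mult_mono) auto
      with WV_ge show False by simp
    qed
    then have "(1/10) * (3/8) \<le> W * (W * V)"
      using WV_ge by (intro mult_mono) auto
    then show ?thesis unfolding eq by simp
  qed
qed

section \<open>Points of M(f_nq)\<close>

locale f_nq_Mset_point =
  fixes n q :: nat and v :: "complex ^ 3" and \<mu> :: complex
  assumes n_pos: "0 < n" and q_pos: "0 < q" and y_nonzero: "v $ 2 \<noteq> 0"
    and cpartial_eq: "\<And>i. cpartial (f_nq n q) i v = \<mu> * cnj (v $ i)"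
begin

abbreviation x where "x \<equiv> v $ 1"
abbreviation y where "y \<equiv> v $ 2"
abbreviation z where "z \<equiv> v $ 3"
abbreviation u where "u \<equiv> x ^ n * y ^ q"
abbreviation a where "a \<equiv> norm x"
abbreviation m where "m \<equiv> norm \<mu>"
abbreviation C where "C \<equiv> norm z ^ 2"

lemma Mset_eq_x: "dfdx_poly n u = \<mu> * cnj x"
  using cpartial_eq[of 1] by (simp add: cpartial_f_nq_1)

lemma Mset_eq_y: "6 * of_nat q * x * (u^3 - u^2) + y * z = \<mu> * (cnj y * y)"
proof -
  have "y * cpartial (f_nq n q) 2 v = \<mu> * (cnj y * y)"
    using cpartial_eq[of 2] by (simp add: ac_simps)
  then show ?thesis by (simp add: y_mult_cpartial_f_nq_2[OF q_pos])
qed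

lemma Mset_eq_z: "y = \<mu> * cnj z"
  using cpartial_eq[of 3] by (simp add: cpartial_f_nq_3)

lemma x_nonzero: "x \<noteq> 0"
proof
  assume "x = 0"
  then have "dfdx_poly n u = 1" using n_pos by (simp add: dfdx_poly_def power_0_left)
  with Mset_eq_x \<open>x = 0\<close> show False by simp
qed

lemma mu_nonzero: "\<mu> \<noteq> 0" and z_nonzero: "z \<noteq> 0"
  using Mset_eq_z y_nonzero by auto

lemma u_nonzero: "u \<noteq> 0"
  using x_nonzero y_nonzero by simp

lemma u_ne_1: "u \<noteq> 1"
proof
  assume "u = 1"
  then have "\<mu> * cnj x = 0" using Mset_eq_x by (simp add: dfdx_poly_def)
  then show False using mu_nonzero x_nonzero by simp
qed

lemma norm_y_sq: "norm y ^ 2 = m^2 * C"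
  using Mset_eq_z by (simp add: norm_mult power_mult_distrib)

lemma norm_v_sq: "norm v ^ 2 = a^2 + m^2 * C + C"
  using norm_vec3_squared[of v] norm_y_sq by simp

lemma x_mult_dfdx_poly: "x * dfdx_poly n u = \<mu> * of_real (a^2)"
  using Mset_eq_x complex_norm_square[of x] by (simp add: ac_simps)

lemma y_mult_z: "y * z = \<mu> * of_real C"
  using Mset_eq_z complex_norm_square[of z] by (simp add: ac_simps)

lemma u_identity: "6 * of_nat q * x * (u^2 * (u - 1)) = \<mu> * of_real ((m^2 - 1) * C)"
proof -
  have "cnj y * y = of_real (m^2 * C)"
    using complex_norm_square[of y] norm_y_sq by (simp add: mult.commute)
  then have "6 * of_nat q * x * (u^3 - u^2) = \<mu> * of_real (m^2 * C) - \<mu> * of_real C"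
    using Mset_eq_y y_mult_z by (simp add: algebra_simps)
  then show ?thesis by (simp add: algebra_simps power2_eq_square power3_eq_cube)
qed

lemma m_ne_1: "m \<noteq> 1"
proof
  assume "m = 1"
  then have "6 * of_nat q * x * (u^2 * (u - 1)) = 0" using u_identity by simp
  then show False using q_pos x_nonzero u_nonzero u_ne_1 by simp
qed

lemma m_sq_minus_1_mult_C_nonzero: "(m^2 - 1) * C \<noteq> 0"
  using m_ne_1 z_nonzero by (simp add: abs_square_eq_1)

text \<open>S is (u - 1)(2u + 1)/u^2, which is real by S_eq.\<close>

definition S :: real where "S = 6 * real q * a^2 / ((m^2 - 1) * C) - 6 * real n"

lemma a_sq_eq: "6 * real q * a^2 = (m^2 - 1) * C * (S + 6 * real n)"
  unfolding S_def using m_sq_minus_1_mult_C_nonzero by simp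

lemma S_eq: "(u - 1) * (2 * u + 1) = of_real S * u^2"
proof -
  define D where "D = complex_of_real ((m^2 - 1) * C)"
  have "D \<noteq> 0" unfolding D_def of_real_eq_0_iff by (rule m_sq_minus_1_mult_C_nonzero)
  have "x * (dfdx_poly n u * D) = of_real (a^2) * (\<mu> * D)"
    using x_mult_dfdx_poly by (simp add: ac_simps)
  also have "\<dots> = x * (of_real (6 * real q * a^2) * (u^2 * (u - 1)))"
    using u_identity unfolding D_def by (simp add: ac_simps)
  finally have "dfdx_poly n u * D = of_real (6 * real q * a^2) * (u^2 * (u - 1))"
    using x_nonzero by simp
  then have "(u - 1) * (((u - 1) * (2 * u + 1) + 6 * of_nat n * u^2) * D)
      = (u - 1) * ((of_real (S + 6 * real n) * u^2) * D)"
    unfolding dfdx_poly_factor a_sq_eq D_def by (simp add: ac_simps)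
  then have "(u - 1) * (2 * u + 1) + 6 * of_nat n * u^2 = of_real (S + 6 * real n) * u^2"
    using u_ne_1 \<open>D \<noteq> 0\<close> by simp
  then show ?thesis by (simp add: algebra_simps)
qed

lemma dfdx_poly_eq: "dfdx_poly n u = (u - 1) * u^2 * of_real (S + 6 * real n)"
  unfolding dfdx_poly_factor S_eq by (simp add: algebra_simps)

lemma m_mult_a: "m * a = norm u ^ 2 * norm (u - 1) * \<bar>S + 6 * real n\<bar>"
proof -
  have "m * a = norm (dfdx_poly n u)" using Mset_eq_x by (simp add: norm_mult)
  then show ?thesis unfolding dfdx_poly_eq norm_mult norm_power norm_of_real by (simp add: ac_simps)
qed

lemma a_mult_norm_u: "6 * real q * a * norm u ^ 2 * norm (u - 1) = m * \<bar>m^2 - 1\<bar> * C"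
proof -
  have "norm (6 * of_nat q * x * (u^2 * (u - 1))) = norm (\<mu> * of_real ((m^2 - 1) * C))"
    by (simp only: u_identity)
  also have "\<dots> = m * (\<bar>m^2 - 1\<bar> * C)"
    by (simp only: norm_mult norm_of_real abs_mult) simp
  finally show ?thesis by (simp add: norm_mult norm_power ac_simps)
qed

lemma q_mult_norm_f: "6 * real q * norm (f_nq n q v) = m * C * \<bar>(m^2 - 1) * S + 6 * real q\<bar>"
proof -
  define X where "X = real q * a^2 - real n * (m^2 - 1) * C + real q * C"
  have fx: "x * (1 - 3 * u^2 + 2 * u^3) = x * dfdx_poly n u - of_nat n * (6 * x * (u^2 * (u - 1)))"
    unfolding dfdx_poly_def by (simp add: algebra_simps power2_eq_square power3_eq_cube)
  have "of_nat q * f_nq n q v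
      = of_nat q * (x * dfdx_poly n u) - of_nat n * (6 * of_nat q * x * (u^2 * (u - 1))) + of_nat q * (y * z)"
    unfolding f_nq_eq fx by (simp add: algebra_simps)
  also have "\<dots> = \<mu> * of_real X"
    unfolding x_mult_dfdx_poly u_identity y_mult_z X_def by (simp add: algebra_simps)
  finally have "norm (of_nat q * f_nq n q v) = m * \<bar>X\<bar>"
    by (simp only: norm_mult norm_of_real)
  then have "6 * real q * norm (f_nq n q v) = m * \<bar>6 * X\<bar>"
    by (simp add: norm_mult abs_mult)
  also have "6 * X = C * ((m^2 - 1) * S + 6 * real q)"
    using a_sq_eq unfolding X_def by algebra
  finally show ?thesis by (simp add: abs_mult)
qed

lemma norm_u_sq: "norm u ^ 2 = (a^2)^n * (m^2 * C)^q"
proof -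
  have "norm u ^ 2 = (a^2)^n * (norm y ^ 2)^q"
    unfolding norm_mult norm_power power_mult_distrib power_mult[symmetric] by (simp add: mult.commute)
  then show ?thesis unfolding norm_y_sq .
qed

lemma m_pos: "0 < m"
  using mu_nonzero by simp

lemma S_plus_neg_if_m_lt_1:
  assumes "m < 1"
  shows "S + 6 * real n < 0"
proof -
  have "m^2 < 1" using assms by (simp add: abs_square_less_1)
  then have "(m^2 - 1) * C < 0" using z_nonzero by (simp add: mult_neg_pos)
  moreover have "0 < (m^2 - 1) * C * (S + 6 * real n)"
    using a_sq_eq[symmetric] q_pos x_nonzero by simp
  ultimately show ?thesis by (smt (verit) zero_less_mult_iff)
qed

lemma m_sq_minus_1_mult_C_pos_if_m_gt_1:
  assumes "1 < m"
  shows "0 < (m^2 - 1) * C"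
proof -
  have "1 < m^2" using assms by (simp add: one_less_power)
  then show ?thesis using z_nonzero by simp
qed

lemma S_plus_pos_if_m_gt_1:
  assumes "1 < m"
  shows "0 < S + 6 * real n"
proof -
  have "0 < (m^2 - 1) * C * (S + 6 * real n)"
    using a_sq_eq[symmetric] q_pos x_nonzero by simp
  with m_sq_minus_1_mult_C_pos_if_m_gt_1[OF assms] show ?thesis by (smt (verit) zero_less_mult_iff)
qed

lemma norm_f_ge_if_m_lt_1:
  assumes "m < 1"
  shows "m * (a^2 + C) \<le> norm (f_nq n q v)"
proof -
  have "m^2 < 1" using assms by (simp add: abs_square_less_1)
  have "S < 0" using S_plus_neg_if_m_lt_1[OF assms] by simp
  have "6 * real q * a^2 = C * ((m^2 - 1) * S) + 6 * real n * ((m^2 - 1) * C)"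
    using a_sq_eq by algebra
  moreover have "0 \<le> (m^2 - 1) * S"
    using \<open>m^2 < 1\<close> \<open>S < 0\<close> by (simp add: mult_nonpos_nonpos)
  moreover have "real n * ((m^2 - 1) * C) \<le> 0"
    using \<open>m^2 < 1\<close> by (simp add: mult_nonneg_nonpos mult_nonpos_nonneg)
  ultimately have "6 * real q * (a^2 + C) \<le> C * \<bar>(m^2 - 1) * S + 6 * real q\<bar>"
    by (simp add: algebra_simps)
  then have "m * (6 * real q * (a^2 + C)) \<le> m * (C * \<bar>(m^2 - 1) * S + 6 * real q\<bar>)"
    using m_pos by (intro mult_left_mono) auto
  then have "6 * real q * (m * (a^2 + C)) \<le> 6 * real q * norm (f_nq n q v)"
    unfolding q_mult_norm_f by (simp add: ac_simps)
  then show ?thesis using q_pos by simp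
qed

lemma m_mult_C_le_if_m_lt_1:
  assumes "m < 1" and "norm (f_nq n q v) \<le> K"
  shows "m * C \<le> K"
proof -
  have "m * C \<le> m * (a^2 + C)" using m_pos by (intro mult_left_mono) auto
  then show ?thesis using norm_f_ge_if_m_lt_1[OF assms(1)] assms(2) by linarith
qed

lemma norm_x_le_if_m_lt_1:
  fixes K :: real
  assumes "m < 1" and f_le: "norm (f_nq n q v) \<le> K"
  shows "a \<le> 27 * K * real n"
proof -
  define UW where "UW = norm u ^ 2 * norm (u - 1)"
  have "0 \<le> a * UW" unfolding UW_def by simp
  have neg: "S + 6 * real n < 0" by (rule S_plus_neg_if_m_lt_1[OF assms(1)])
  have "m * a^2 = a * UW * \<bar>S + 6 * real n\<bar>"
    using m_mult_a unfolding UW_def by (simp add: power2_eq_square ac_simps)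
  moreover have "6 * q * a * UW \<le> m * C"
  proof -
    have "\<bar>m^2 - 1\<bar> \<le> 1" using assms(1) m_pos by (simp add: abs_le_iff power_le_one)
    then have "m * \<bar>m^2 - 1\<bar> * C \<le> m * 1 * C" using m_pos by (intro mult_right_mono) auto
    then show ?thesis using a_mult_norm_u unfolding UW_def by (simp add: ac_simps)
  qed
  moreover have "m * (a^2 + C) \<le> K" using norm_f_ge_if_m_lt_1[OF assms(1)] f_le by simp
  ultimately have sum_le: "a * UW * (\<bar>S + 6 * real n\<bar> + 6 * q) \<le> K" by (simp add: algebra_simps)
  have "\<bar>S\<bar> \<le> n * (\<bar>S + 6 * real n\<bar> + 6 * q)"
  proof -
    have "\<bar>S\<bar> = \<bar>S + 6 * real n\<bar> + 6 * n" using neg by simp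
    moreover have "\<bar>S + 6 * real n\<bar> \<le> n * \<bar>S + 6 * real n\<bar>" "6 * real n \<le> 6 * n * q"
      using n_pos q_pos by (simp_all add: mult_le_cancel_right1)
    ultimately show ?thesis by (simp add: algebra_simps)
  qed
  then have "a * UW * \<bar>S\<bar> \<le> a * UW * (n * (\<bar>S + 6 * real n\<bar> + 6 * q))"
    using \<open>0 \<le> a * UW\<close> by (rule mult_left_mono)
  also have "\<dots> = n * (a * UW * (\<bar>S + 6 * real n\<bar> + 6 * q))" by (simp add: ac_simps)
  also have "\<dots> \<le> n * K" using sum_le by (rule mult_left_mono) simp
  finally have aUWS_le: "a * (UW * \<bar>S\<bar>) \<le> n * K" by (simp add: ac_simps)
  have "3/80 \<le> UW * \<bar>S\<bar>"
    unfolding UW_def using neg n_pos by (intro norm_u_sq_mult_abs_S_ge_if_S_le_minus_6[OF S_eq]) simp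
  then have "a * (3/80) \<le> a * (UW * \<bar>S\<bar>)" by (rule mult_left_mono) simp
  with aUWS_le have "a * (3/80) \<le> n * K" by linarith
  then have "a \<le> 80/3 * (n * K)" by simp
  also have "\<dots> \<le> 27 * (n * K)"
    using f_le order_trans[OF norm_ge_zero f_le] by (intro mult_right_mono) auto
  finally show ?thesis by (simp add: ac_simps)
qed

lemma inverse_m_le_if_m_lt_1:
  fixes K :: real
  assumes "m < 1" and f_le: "norm (f_nq n q v) \<le> K" and "1 \<le> K"
  shows "1 / m \<le> 34 * real n * (27 * K * real n) ^ (2 * n) * K ^ q"
proof -
  define A where "A = 27 * K * real n"
  have "1 * 1 \<le> K * n" using \<open>1 \<le> K\<close> n_pos by (intro mult_mono) auto
  then have "1 \<le> A" unfolding A_def by simp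
  have a_le: "a \<le> A" unfolding A_def by (rule norm_x_le_if_m_lt_1[OF assms(1,2)])
  have mC_le: "m * C \<le> K" by (rule m_mult_C_le_if_m_lt_1[OF assms(1,2)])
  show ?thesis
  proof (cases "norm u ^ 2 \<le> 1 / (34 * real n)")
    case True
    have "1/2 \<le> m * a"
      using norm_dfdx_poly_ge[OF n_pos True] Mset_eq_x by (simp add: norm_mult)
    then have "1 / m \<le> 2 * a" using m_pos by (simp add: field_simps)
    also have "\<dots> \<le> 2 * A" using a_le by simp
    also have "\<dots> \<le> 34 * real n * A ^ (2 * n)"
      using n_pos \<open>1 \<le> A\<close> by (intro mult_mono) (simp_all add: self_le_power)
    also have "\<dots> \<le> 34 * real n * A ^ (2 * n) * K ^ q"
      using mult_left_mono[of 1 "K ^ q" "34 * real n * A ^ (2 * n)"] \<open>1 \<le> A\<close> \<open>1 \<le> K\<close>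
      by (simp add: one_le_power)
    finally show ?thesis unfolding A_def .
  next
    case False
    then have "1 / (34 * real n) < norm u ^ 2" by simp
    also have "norm u ^ 2 = (a^2)^n * m^q * (m * C)^q"
      unfolding norm_u_sq by (simp add: power2_eq_square power_mult_distrib ac_simps)
    also have "\<dots> \<le> (A^2)^n * m * K^q"
    proof (intro mult_mono)
      show "(a^2)^n \<le> (A^2)^n" using a_le by (intro power_mono) auto
      show "m^q \<le> m" using power_decreasing[of 1 q m] assms(1) m_pos q_pos by simp
      show "(m * C)^q \<le> K^q" using mC_le m_pos by (intro power_mono) auto
    qed (use m_pos \<open>1 \<le> A\<close> in auto)
    finally have "1 / (34 * real n) < (A^2)^n * m * K^q" .
    then have "1 / m < 34 * real n * (A^2)^n * K^q" using m_pos n_pos by (simp add: field_simps)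
    then show ?thesis unfolding A_def[symmetric] power_mult by simp
  qed
qed

lemma norm_v_sq_le_if_m_lt_1:
  fixes K :: real
  assumes "m < 1" and f_le: "norm (f_nq n q v) \<le> K" and "1 \<le> K"
  shows "norm v ^ 2 \<le> (27 * K * real n)^2 + 68 * real n * (27 * K * real n) ^ (2 * n) * K ^ (q + 1)"
proof -
  have "m^2 * C \<le> C" using assms(1) m_pos by (intro mult_left_le_one_le) (auto simp: power_le_one)
  moreover have "a^2 \<le> (27 * K * real n)^2"
    using norm_x_le_if_m_lt_1[OF assms(1,2)] by (intro power_mono) auto
  moreover have "C \<le> K * (34 * real n * (27 * K * real n) ^ (2 * n) * K ^ q)"
  proof -
    have "m * C \<le> K" by (rule m_mult_C_le_if_m_lt_1[OF assms(1,2)])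
    then have "C \<le> K * (1 / m)" using m_pos by (simp add: field_simps)
    also have "\<dots> \<le> K * (34 * real n * (27 * K * real n) ^ (2 * n) * K ^ q)"
      using inverse_m_le_if_m_lt_1[OF assms] \<open>1 \<le> K\<close> by (intro mult_left_mono) auto
    finally show ?thesis .
  qed
  ultimately show ?thesis unfolding norm_v_sq by (simp add: algebra_simps)
qed

lemma C_mult_le_if_m_gt_1:
  fixes K :: real
  assumes "1 < m" and "norm (f_nq n q v) \<le> K"
  shows "C * \<bar>(m^2 - 1) * S + 6 * real q\<bar> \<le> 6 * real q * K"
proof -
  have "C * \<bar>(m^2 - 1) * S + 6 * real q\<bar> \<le> m * C * \<bar>(m^2 - 1) * S + 6 * real q\<bar>"
    using mult_right_mono[of 1 m "C * \<bar>(m^2 - 1) * S + 6 * real q\<bar>"] assms(1) by (simp add: ac_simps)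
  also have "\<dots> \<le> 6 * real q * K"
    unfolding q_mult_norm_f[symmetric] using assms(2) by (intro mult_left_mono) simp_all
  finally show ?thesis .
qed

lemma C_bounds_if_m_gt_1_S_nonneg:
  fixes K :: real
  assumes "1 < m" and "0 \<le> S" and "norm (f_nq n q v) \<le> K"
  shows "C * ((m^2 - 1) * S) \<le> 6 * real q * K" and "C \<le> K"
proof -
  have "1 < m^2" using assms(1) by (simp add: one_less_power)
  then have T_nonneg: "0 \<le> (m^2 - 1) * S" using assms(2) by simp
  then have "C * ((m^2 - 1) * S + 6 * real q) \<le> 6 * real q * K"
    using C_mult_le_if_m_gt_1[OF assms(1,3)] by simp
  then have "C * ((m^2 - 1) * S) + 6 * real q * C \<le> 6 * real q * K"
    by (simp add: algebra_simps)
  moreover have "0 \<le> C * ((m^2 - 1) * S)" "0 \<le> 6 * real q * C" using T_nonneg by simp_all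
  ultimately have "C * ((m^2 - 1) * S) \<le> 6 * real q * K" and "6 * real q * C \<le> 6 * real q * K"
    by linarith+
  then show "C * ((m^2 - 1) * S) \<le> 6 * real q * K" and "C \<le> K" using q_pos by simp_all
qed

lemma norm_x_sq_le_if_m_gt_1_S_nonneg:
  fixes K :: real
  assumes "1 < m" and "0 \<le> S" and f_le: "norm (f_nq n q v) \<le> K"
  shows "a^2 \<le> (657 * real n)^2 + (1 + 6 * real n) * K"
proof (cases "norm u \<le> 4")
  case True
  have "a \<le> m * a" using assms(1) by (simp add: mult_le_cancel_right1)
  also have "\<dots> \<le> 657 * real n"
    using norm_dfdx_poly_le[OF n_pos True] Mset_eq_x by (simp add: norm_mult)
  finally have "a^2 \<le> (657 * real n)^2" by (intro power_mono) auto
  moreover have "0 \<le> K" using f_le norm_ge_zero order_trans by blast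
  ultimately show ?thesis by (simp add: add_increasing2)
next
  case False
  then have "1 \<le> S" using S_ge_1_if_norm_gt_4[OF S_eq] by simp
  then have "S + 6 * real n \<le> S * (1 + 6 * real n)"
    using mult_left_mono[of 1 S "6 * real n"] by (simp add: algebra_simps)
  then have "6 * real q * a^2 \<le> (m^2 - 1) * C * (S * (1 + 6 * real n))"
    unfolding a_sq_eq using m_sq_minus_1_mult_C_pos_if_m_gt_1[OF assms(1)] by (simp add: mult_left_mono)
  also have "\<dots> = C * ((m^2 - 1) * S) * (1 + 6 * real n)" by (simp add: ac_simps)
  also have "\<dots> \<le> 6 * real q * K * (1 + 6 * real n)"
    using C_bounds_if_m_gt_1_S_nonneg(1)[OF assms] by (rule mult_right_mono) simp
  finally have "6 * real q * a^2 \<le> 6 * real q * ((1 + 6 * real n) * K)" by (simp only: ac_simps)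
  then have "a^2 \<le> (1 + 6 * real n) * K" by (rule mult_left_le_imp_le) (use q_pos in simp)
  then show ?thesis by (simp add: add_increasing)
qed

lemma norm_v_sq_le_if_m_gt_1_S_nonneg:
  fixes K :: real
  assumes "1 < m" and "0 \<le> S" and "norm (f_nq n q v) \<le> K"
  shows "norm v ^ 2 \<le> (1 + real q) * ((657 * real n)^2 + (1 + 6 * real n) * K) + 2 * K"
proof -
  have mC_nonneg: "0 \<le> (m^2 - 1) * C"
    using m_sq_minus_1_mult_C_pos_if_m_gt_1[OF assms(1)] by simp
  have "(m^2 - 1) * C * 1 \<le> (m^2 - 1) * C * real n"
    using mC_nonneg n_pos by (intro mult_left_mono) simp_all
  moreover have "(m^2 - 1) * C * (6 * real n) \<le> 6 * real q * a^2"
    unfolding a_sq_eq using assms(2) mC_nonneg by (intro mult_left_mono) simp_all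
  ultimately have "(m^2 - 1) * C \<le> real q * a^2" by simp
  then have "a^2 + m^2 * C + C \<le> (1 + real q) * a^2 + 2 * C" by (simp add: algebra_simps)
  also have "\<dots> \<le> (1 + real q) * ((657 * real n)^2 + (1 + 6 * real n) * K) + 2 * K"
    using norm_x_sq_le_if_m_gt_1_S_nonneg[OF assms] C_bounds_if_m_gt_1_S_nonneg(2)[OF assms]
    by (intro add_mono mult_left_mono) auto
  finally show ?thesis unfolding norm_v_sq .
qed

lemma norm_u_sq_mult_le_if_S_neg:
  assumes "S < 0"
  shows "norm u ^ 2 * norm (u - 1) \<le> 80"
proof -
  have "norm u \<le> 4" using S_ge_1_if_norm_gt_4[OF S_eq] assms by force
  moreover have "norm (u - 1) \<le> norm u + 1" using norm_triangle_ineq4[of u 1] by simp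
  ultimately have "norm u ^ 2 * norm (u - 1) \<le> 4 ^ 2 * 5" by (intro mult_mono power_mono) auto
  then show ?thesis by simp
qed

lemma m_mult_a_le_if_S_neg:
  assumes "1 < m" and "S < 0"
  shows "m * a \<le> 480 * real n"
proof -
  have "\<bar>S + 6 * real n\<bar> \<le> 6 * real n" using S_plus_pos_if_m_gt_1[OF assms(1)] assms(2) by simp
  then have "norm u ^ 2 * norm (u - 1) * \<bar>S + 6 * real n\<bar> \<le> 80 * (6 * real n)"
    using norm_u_sq_mult_le_if_S_neg[OF assms(2)] by (intro mult_mono) auto
  then show ?thesis unfolding m_mult_a by simp
qed

lemma m_sq_mult_le_if_S_neg:
  assumes "1 < m" and "S < 0"
  shows "m^2 * ((m^2 - 1) * C) \<le> 230400 * real n * real q"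
proof -
  have "1 < m^2" using assms(1) by (simp add: one_less_power)
  then have "m^2 * ((m^2 - 1) * C) = m * (m * \<bar>m^2 - 1\<bar> * C)"
    by (simp add: power2_eq_square ac_simps)
  also have "\<dots> = 6 * real q * (m * a) * (norm u ^ 2 * norm (u - 1))"
    unfolding a_mult_norm_u[symmetric] by (simp add: ac_simps)
  also have "\<dots> \<le> 6 * real q * (480 * real n) * 80"
  proof (rule mult_mono)
    show "6 * real q * (m * a) \<le> 6 * real q * (480 * real n)"
      using m_mult_a_le_if_S_neg[OF assms] by (rule mult_left_mono) simp
  qed (use norm_u_sq_mult_le_if_S_neg[OF assms(2)] in auto)
  finally show ?thesis by (simp add: ac_simps)
qed

lemma C_le_if_S_neg_m_sq_lt_2:
  fixes K :: real
  assumes "1 < m" and "S < 0" and "m^2 < 2" and f_le: "norm (f_nq n q v) \<le> K"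
  shows "C \<le> 2 * K + 460800 * real n ^ 2"
proof -
  have "1 < m^2" using assms(1) by (simp add: one_less_power)
  have K_nonneg: "0 \<le> K" using f_le norm_ge_zero order_trans by blast
  show ?thesis
  proof (cases "2 * real n * (m^2 - 1) \<le> q")
    case True
    have "\<bar>S\<bar> \<le> 6 * real n" using S_plus_pos_if_m_gt_1[OF assms(1)] assms(2) by simp
    then have "\<bar>(m^2 - 1) * S\<bar> \<le> (m^2 - 1) * (6 * real n)"
      using \<open>1 < m^2\<close> by (simp add: abs_mult mult_left_mono)
    moreover have "(m^2 - 1) * (6 * real n) \<le> 3 * real q"
      using mult_left_mono[OF True, of 3] by (simp add: algebra_simps)
    ultimately have "3 * real q \<le> \<bar>(m^2 - 1) * S + 6 * real q\<bar>"
      using abs_ge_self[of "(m^2 - 1) * S + 6 * real q"] abs_ge_minus_self[of "(m^2 - 1) * S"] by linarith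
    then have "C * (3 * real q) \<le> 6 * real q * K"
      using C_mult_le_if_m_gt_1[OF assms(1) f_le] by (meson mult_left_mono order_trans zero_le_power2 norm_ge_zero)
    then have "C \<le> 2 * K" using q_pos by simp
    then show ?thesis by (intro add_increasing2) simp_all
  next
    case False
    have "(m^2 - 1) * C \<le> m^2 * ((m^2 - 1) * C)"
      using mult_right_mono[of 1 "m^2" "(m^2 - 1) * C"] \<open>1 < m^2\<close>
        m_sq_minus_1_mult_C_pos_if_m_gt_1[OF assms(1)] by simp
    then have X: "(m^2 - 1) * C \<le> 230400 * real n * real q"
      using m_sq_mult_le_if_S_neg[OF assms(1,2)] by simp
    have "real q * C \<le> 2 * real n * ((m^2 - 1) * C)"
      using mult_right_mono[of "real q" "2 * real n * (m^2 - 1)" C] False by (simp add: algebra_simps)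
    also have "\<dots> \<le> 2 * real n * (230400 * real n * real q)" using X by (rule mult_left_mono) simp
    also have "\<dots> = real q * (460800 * real n ^ 2)" by (simp add: power2_eq_square)
    finally have "C \<le> 460800 * real n ^ 2" by (rule mult_left_le_imp_le) (use q_pos in simp)
    then show ?thesis using K_nonneg by simp
  qed
qed

lemma norm_v_sq_le_if_m_gt_1_S_neg:
  fixes K :: real
  assumes "1 < m" and "S < 0" and f_le: "norm (f_nq n q v) \<le> K"
  shows "norm v ^ 2 \<le> 1612800 * real n ^ 2 + 460800 * real n * real q + 6 * K"
proof -
  have K_nonneg: "0 \<le> K" using f_le norm_ge_zero order_trans by blast
  have "1 < m^2" using assms(1) by (simp add: one_less_power)
  have "a \<le> m * a" using assms(1) by (simp add: mult_le_cancel_right1)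
  then have "a \<le> 480 * real n" using m_mult_a_le_if_S_neg[OF assms(1,2)] by simp
  then have "a^2 \<le> (480 * real n)^2" by (rule power_mono) simp
  then have a_sq: "a^2 \<le> 230400 * real n ^ 2" by (simp add: power_mult_distrib)
  have "m^2 * C + C \<le> 460800 * real n * real q + (6 * K + 1382400 * real n ^ 2)"
  proof (cases "2 \<le> m^2")
    case True
    have "C \<le> (m^2 - 1) * C" using True by (simp add: mult_le_cancel_right1)
    moreover have "(m^2 - 1) * C \<le> m^2 * ((m^2 - 1) * C)"
      using mult_right_mono[of 1 "m^2" "(m^2 - 1) * C"] \<open>1 < m^2\<close>
        m_sq_minus_1_mult_C_pos_if_m_gt_1[OF assms(1)] by simp
    ultimately have "m^2 * C \<le> m^2 * ((m^2 - 1) * C)" and "C \<le> m^2 * ((m^2 - 1) * C)"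
      by (simp_all add: mult_left_mono)
    then have "m^2 * C + C \<le> 460800 * real n * real q"
      using m_sq_mult_le_if_S_neg[OF assms(1,2)] by simp
    moreover have "0 \<le> 6 * K + 1382400 * real n ^ 2" using K_nonneg by simp
    ultimately show ?thesis by simp
  next
    case False
    then have "m^2 * C + C \<le> 3 * C" by (simp add: mult_right_mono)
    also have "\<dots> \<le> 3 * (2 * K + 460800 * real n ^ 2)"
      using C_le_if_S_neg_m_sq_lt_2[OF assms(1,2) _ f_le] False by simp
    finally have "m^2 * C + C \<le> 6 * K + 1382400 * real n ^ 2" by simp
    moreover have "0 \<le> 460800 * real n * real q" by simp
    ultimately show ?thesis by linarith
  qed
  then show ?thesis unfolding norm_v_sq using a_sq by simp
qed

end

text \<open>One summand for each of the cases m < 1, m > 1 with S >= 0, and m > 1 with S < 0.\<close>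

definition f_nq_sublevel_bound :: "nat \<Rightarrow> nat \<Rightarrow> real \<Rightarrow> real" where
  "f_nq_sublevel_bound n q K =
     (27 * K * real n)^2 + 68 * real n * (27 * K * real n) ^ (2 * n) * K ^ (q + 1)
     + ((1 + real q) * ((657 * real n)^2 + (1 + 6 * real n) * K) + 2 * K)
     + (1612800 * real n ^ 2 + 460800 * real n * real q + 6 * K)"

lemma (in f_nq_Mset_point) norm_v_sq_le_sublevel_bound:
  fixes K :: real
  assumes f_le: "norm (f_nq n q v) \<le> K" and "1 \<le> K"
  shows "norm v ^ 2 \<le> f_nq_sublevel_bound n q K"
proof -
  have "0 \<le> (27 * K * real n)^2 + 68 * real n * (27 * K * real n) ^ (2 * n) * K ^ (q + 1)"
    and "0 \<le> (1 + real q) * ((657 * real n)^2 + (1 + 6 * real n) * K) + 2 * K"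
    and "0 \<le> 1612800 * real n ^ 2 + 460800 * real n * real q + 6 * K"
    using \<open>1 \<le> K\<close> by simp_all
  moreover consider "m < 1" | "1 < m" "0 \<le> S" | "1 < m" "S < 0"
    using m_ne_1 by fastforce
  then have "norm v ^ 2 \<le> (27 * K * real n)^2 + 68 * real n * (27 * K * real n) ^ (2 * n) * K ^ (q + 1)
      \<or> norm v ^ 2 \<le> (1 + real q) * ((657 * real n)^2 + (1 + 6 * real n) * K) + 2 * K
      \<or> norm v ^ 2 \<le> 1612800 * real n ^ 2 + 460800 * real n * real q + 6 * K"
    by cases (use norm_v_sq_le_if_m_lt_1[OF _ f_le \<open>1 \<le> K\<close>]
        norm_v_sq_le_if_m_gt_1_S_nonneg[OF _ _ f_le] norm_v_sq_le_if_m_gt_1_S_neg[OF _ _ f_le] in auto)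
  ultimately show ?thesis unfolding f_nq_sublevel_bound_def by linarith
qed

section \<open>M-tameness and failure of quasitameness\<close>

lemma norm_eq_norm_f_nq_if_y_zero:
  assumes "0 < q" and "v $ 2 = 0" and cpartial_eq: "\<And>i. cpartial (f_nq n q) i v = \<mu> * cnj (v $ i)"
  shows "norm v = norm (f_nq n q v)"
proof -
  have "1 = \<mu> * cnj (v $ 1)"
    using cpartial_eq[of 1] assms(1,2) by (simp add: cpartial_f_nq_1 dfdx_poly_def power_0_left)
  then have "\<mu> \<noteq> 0" by auto
  then have "v $ 3 = 0" using cpartial_eq[of 3] assms(2) by (simp add: cpartial_f_nq_3)
  then show ?thesis
    using norm_vec3_squared[of v] assms(1,2) by (simp add: f_nq_eq power2_eq_iff_nonneg power_0_left)
qed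

lemma bounded_sublevel_set_f_nq:
  assumes "0 < n" and "0 < q"
  shows "bounded {v \<in> Mset (f_nq n q). norm (f_nq n q v) \<le> K}"
  unfolding bounded_iff
proof (intro exI ballI)
  define K' where "K' = max 1 K"
  fix v assume "v \<in> {v \<in> Mset (f_nq n q). norm (f_nq n q v) \<le> K}"
  then have v: "v \<in> Mset (f_nq n q)" and f_le: "norm (f_nq n q v) \<le> K'"
    unfolding K'_def by auto
  obtain \<mu> where cpartial_eq: "\<And>i. cpartial (f_nq n q) i v = \<mu> * cnj (v $ i)"
    using cpartial_eq_if_in_Mset[OF v] by blast
  have "norm v ^ 2 \<le> K'^2 + f_nq_sublevel_bound n q K'"
  proof (cases "v $ 2 = 0")
    case True
    then have "norm v \<le> K'" using norm_eq_norm_f_nq_if_y_zero[OF assms(2) True cpartial_eq] f_le by simp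
    then have "norm v ^ 2 \<le> K'^2" by (intro power_mono) auto
    moreover have "0 \<le> f_nq_sublevel_bound n q K'"
      unfolding f_nq_sublevel_bound_def K'_def by simp
    ultimately show ?thesis by simp
  next
    case False
    then interpret f_nq_Mset_point n q v \<mu>
      using assms cpartial_eq by unfold_locales
    have "norm v ^ 2 \<le> f_nq_sublevel_bound n q K'"
      using norm_v_sq_le_sublevel_bound[OF f_le] unfolding K'_def by simp
    moreover have "0 \<le> K'^2" by simp
    ultimately show ?thesis by linarith
  qed
  then show "norm v \<le> sqrt (K'^2 + f_nq_sublevel_bound n q K')"
    by (simp add: real_le_rsqrt)
qed

lemma not_quasitame_f_nq:
  assumes "0 < n" and "0 < q"
  shows "\<not> quasitame (f_nq n q)"
proof (rule not_quasitameI)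
  define z :: "nat \<Rightarrow> complex ^ 3" where
    "z k = vector [of_nat (k + 1) ^ q, 1 / of_nat (k + 1) ^ n, 0]" for k
  have z1: "z k $ 1 = of_nat (k + 1) ^ q" and z2: "z k $ 2 = 1 / of_nat (k + 1) ^ n"
    and z3: "z k $ 3 = 0" for k
    unfolding z_def by simp_all
  have y_nonzero: "z k $ 2 \<noteq> 0" for k
    unfolding z2 by (simp only: divide_eq_0_iff power_eq_0_iff of_nat_eq_0_iff) simp
  have u_eq_1: "(z k $ 1) ^ n * (z k $ 2) ^ q = 1" for k
  proof -
    define c :: complex where "c = of_nat (k + 1)"
    have "c \<noteq> 0" unfolding c_def by (simp only: of_nat_eq_0_iff)
    then show ?thesis
      unfolding z1 z2 c_def[symmetric] by (simp add: power_mult[symmetric] power_divide mult.commute)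
  qed
  have grad: "cgrad (f_nq n q) (z k) = vector [0, 0, cnj (z k $ 2)]" for k
  proof -
    have "cpartial (f_nq n q) 1 (z k) = 0"
      unfolding cpartial_f_nq_1 u_eq_1 dfdx_poly_factor by simp
    moreover have "z k $ 2 * cpartial (f_nq n q) 2 (z k) = 0"
      unfolding y_mult_cpartial_f_nq_2[OF assms(2)] u_eq_1 z3 by simp
    ultimately show ?thesis
      using y_nonzero[of k] unfolding cgrad_def
      by (simp add: vec_eq_iff forall_3 cpartial_f_nq_3)
  qed
  show "filterlim (\<lambda>k. norm (z k)) at_top sequentially"
  proof (rule filterlim_at_top_mono[OF filterlim_real_sequentially always_eventually], intro allI)
    fix k
    have "real k \<le> real (k + 1) ^ q" using assms(2)
      by (metis le_add1 of_nat_le_iff order_trans self_le_power of_nat_1 of_nat_add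
          le_add2 of_nat_0_le_iff)
    also have "\<dots> = norm (z k $ 1)" by (simp only: z1 norm_power norm_of_nat)
    also have "\<dots> \<le> norm (z k)" by (rule Finite_Cartesian_Product.norm_nth_le)
    finally show "real k \<le> norm (z k)" .
  qed
  show "(\<lambda>k. cgrad (f_nq n q) (z k)) \<longlonglongrightarrow> 0"
  proof (rule Lim_null_comparison[OF always_eventually LIMSEQ_inverse_real_of_nat], intro allI)
    fix k
    have "norm (cgrad (f_nq n q) (z k)) = norm (z k $ 2)"
      using norm_vec3_squared[of "cgrad (f_nq n q) (z k)"] unfolding grad
      by (simp add: power2_eq_iff_nonneg)
    also have "\<dots> = inverse (real (Suc k) ^ n)"
      by (simp only: z2 norm_divide norm_power norm_of_nat norm_one) (simp add: divide_inverse)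
    also have "\<dots> \<le> inverse (real (Suc k))"
      using assms(1) by (intro le_imp_inverse_le self_le_power) auto
    finally show "norm (cgrad (f_nq n q) (z k)) \<le> inverse (real (Suc k))" .
  qed
  show "f_nq n q (z k) = hprod (z k) (cgrad (f_nq n q) (z k))" for k
    unfolding f_nq_eq u_eq_1 hprod_def sum_3 grad z3 by simp
qed

theorem proposition1p8:
  fixes n q :: nat
  assumes "n > 0" and "q > 0"
  shows "M_tame (f_nq n q) \<and> \<not> quasitame (f_nq n q)"
  using M_tame_if_bounded_sublevel_sets[OF bounded_sublevel_set_f_nq[OF assms]]
    not_quasitame_f_nq[OF assms] by blast

end
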